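(* Let $k\ge1$. (1) An element $g=(g_1,g_2)$ of $B_k$ lies in $G_k'$ if and only if $g_1,g_2\in G_{k-1}$ and $g_1g_2\in B_{k-1}'$. (2) Every element of $G_k'$ is a single commutator: $G_k'=\{[f_1,f_2]\mid f_1,f_2\in G_k\}$.
   Context: Let $C_2=\{e,\sigma\}$ with $\sigma=(1,2)$. Define $B_1=C_2$ and $B_k=B_{k-1}\wr C_2$ for $k>1$, with elements written as wreath recursions $(g_1,g_2)\pi$, $g_1,g_2\in B_{k-1}$, $\pi\in C_2$, and multiplication $(g_1,g_2)\pi\cdot(h_1,h_2)\rho=(g_1h_{\pi(1)},g_2h_{\pi(2)})\pi\rho$; $(g_1,g_2)$ denotes an element with $\pi=e$. Define $G_1=\{e\}$ and, for $k>1$, $G_k=\{(g_1,g_2)\pi\in B_k : g_1g_2\in G_{k-1}\}$ (so $G_k\cong\mathrm{Syl}_2A_{2^k}$). The commutator is $[a,b]=aba^{-1}b^{-1}$. *)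

theory Defs
  imports "HOL-Algebra.Solvable_Groups"
begin

text \<open>Wreath recursion elements. Leaf is the unique element of the trivial group B_0;
  Node g1 g2 p stands for (g1,g2) pi, where p = True means pi = sigma = (1 2)
  and p = False means pi = e.\<close>
datatype wr = Leaf | Node wr wr bool

fun wmult :: "wr \<Rightarrow> wr \<Rightarrow> wr" where
  "wmult Leaf Leaf = Leaf"
| "wmult (Node g1 g2 p) (Node h1 h2 q) =
     Node (wmult g1 (if p then h2 else h1)) (wmult g2 (if p then h1 else h2)) (p \<noteq> q)"
| "wmult _ _ = Leaf"

fun wone :: "nat \<Rightarrow> wr" where
  "wone 0 = Leaf"
| "wone (Suc k) = Node (wone k) (wone k) False"

fun Bset :: "nat \<Rightarrow> wr set" where
  "Bset 0 = {Leaf}"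
| "Bset (Suc k) = {Node g1 g2 p | g1 g2 p. g1 \<in> Bset k \<and> g2 \<in> Bset k}"

definition Bgrp :: "nat \<Rightarrow> wr monoid" where
  "Bgrp k = \<lparr>carrier = Bset k, mult = wmult, one = wone k\<rparr>"

text \<open>G_1 = {e}; G_k = {(g1,g2)pi in B_k : g1 g2 in G_(k-1)} for k > 1.
  G_0 is set to the trivial group B_0 (only used in part (1) for k = 1).\<close>
fun Gset :: "nat \<Rightarrow> wr set" where
  "Gset 0 = {Leaf}"
| "Gset (Suc 0) = {wone 1}"
| "Gset (Suc (Suc k)) = {Node g1 g2 p | g1 g2 p. Node g1 g2 p \<in> Bset (Suc (Suc k))
       \<and> wmult g1 g2 \<in> Gset (Suc k)}"

definition commutator :: "('a, 'b) monoid_scheme \<Rightarrow> 'a \<Rightarrow> 'a \<Rightarrow> 'a" where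
  "commutator G a b = a \<otimes>\<^bsub>G\<^esub> b \<otimes>\<^bsub>G\<^esub> inv\<^bsub>G\<^esub> a \<otimes>\<^bsub>G\<^esub> inv\<^bsub>G\<^esub> b"

end

theory Submission
  imports Defs
begin

(* The parity of the number of swaps performed at depth i is a homomorphism from B_k to C_2,
   and on G_k the parity of the left half at depth k-2 is one more; every commutator lies in
   the common kernel of such homomorphisms. Conversely, if h1 h2 = [X, Y] then
   (h1, h2) = [(X, h1^-1 X), (1, Y) sigma], and (1, Y) sigma lies in G whenever Y does.
   By induction on k this writes every element of these kernels as a single commutator, so the
   kernels are exactly the commutator sets and the derived subgroups B_k' and G_k'; part (1)
   is the description of the kernel for G_k in coordinates. *)

lemma Node_in_Bset_Suc [simp]: "Node g1 g2 p \<in> Bset (Suc k) \<longleftrightarrow> g1 \<in> Bset k \<and> g2 \<in> Bset k"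
  by auto

lemma Leaf_notin_Bset_Suc [simp]: "Leaf \<notin> Bset (Suc k)"
  by auto

lemma Bset_SucE:
  assumes "x \<in> Bset (Suc k)"
  obtains g1 g2 p where "x = Node g1 g2 p" "g1 \<in> Bset k" "g2 \<in> Bset k"
  using assms by auto

declare Bset.simps(2) [simp del]

fun winv :: "wr \<Rightarrow> wr" where
  "winv Leaf = Leaf"
| "winv (Node g1 g2 p) = (if p then Node (winv g2) (winv g1) True else Node (winv g1) (winv g2) False)"

lemma wmult_closed: "a \<in> Bset k \<Longrightarrow> b \<in> Bset k \<Longrightarrow> wmult a b \<in> Bset k"
  by (induction k arbitrary: a b) (auto elim!: Bset_SucE)

lemma wone_closed [simp]: "wone k \<in> Bset k"
  by (induction k) auto

lemma winv_closed: "a \<in> Bset k \<Longrightarrow> winv a \<in> Bset k"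
  by (induction k arbitrary: a) (auto elim!: Bset_SucE)

lemma wmult_assoc:
  "a \<in> Bset k \<Longrightarrow> b \<in> Bset k \<Longrightarrow> c \<in> Bset k \<Longrightarrow> wmult (wmult a b) c = wmult a (wmult b c)"
  by (induction k arbitrary: a b c) (auto elim!: Bset_SucE)

lemma wone_wmult: "a \<in> Bset k \<Longrightarrow> wmult (wone k) a = a"
  by (induction k arbitrary: a) (auto elim!: Bset_SucE)

lemma winv_wmult: "a \<in> Bset k \<Longrightarrow> wmult (winv a) a = wone k"
  by (induction k arbitrary: a) (auto elim!: Bset_SucE)

lemma carrier_Bgrp [simp]: "carrier (Bgrp k) = Bset k"
  and mult_Bgrp [simp]: "mult (Bgrp k) = wmult"
  and one_Bgrp [simp]: "one (Bgrp k) = wone k"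
  by (simp_all add: Bgrp_def)

lemma group_Bgrp: "group (Bgrp k)"
  by (rule groupI) (auto intro: wmult_closed wmult_assoc wone_wmult winv_closed winv_wmult)

lemma subgroup_Bset: "subgroup (Bset k) (Bgrp k)"
  using group.subgroup_self[OF group_Bgrp] by simp

lemma inv_Bgrp [simp]: "a \<in> Bset k \<Longrightarrow> inv\<^bsub>Bgrp k\<^esub> a = winv a"
  using group.inv_equality[OF group_Bgrp] winv_wmult winv_closed by simp

lemma commutator_Bgrp:
  "a \<in> Bset k \<Longrightarrow> b \<in> Bset k \<Longrightarrow>
    commutator (Bgrp k) a b = wmult (wmult (wmult a b) (winv a)) (winv b)"
  by (simp add: commutator_def)

lemma derived_set_eq: "derived_set G X = {commutator G a b | a b. a \<in> X \<and> b \<in> X}"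
  unfolding commutator_def by blast

lemma (in group) derived_eq_subgroup:
  assumes "subgroup H G" "derived_set G X = H"
  shows "derived G X = H"
  unfolding derived_def assms(2)[symmetric]
  using generateI[OF assms(1) subset_refl] assms by simp

definition parity_hom :: "('a, 'b) monoid_scheme \<Rightarrow> 'a set \<Rightarrow> ('a \<Rightarrow> bool) \<Rightarrow> bool" where
  "parity_hom G H f \<longleftrightarrow> (\<forall>a\<in>H. \<forall>b\<in>H. f (a \<otimes>\<^bsub>G\<^esub> b) = (f a \<noteq> f b))"

lemma parity_hom_subset: "parity_hom G H f \<Longrightarrow> H' \<subseteq> H \<Longrightarrow> parity_hom G H' f"
  unfolding parity_hom_def by blast

lemma (in group) parity_hom_one:
  assumes "subgroup H G" "parity_hom G H f"
  shows "\<not> f \<one>"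
  using assms subgroup.one_closed[OF assms(1)] by (force simp: parity_hom_def)

lemma (in group) parity_hom_inv:
  assumes "subgroup H G" "parity_hom G H f" "a \<in> H"
  shows "f (inv a) = f a"
proof -
  have "f (a \<otimes> inv a) = (f a \<noteq> f (inv a))"
    using assms subgroup.m_inv_closed[OF assms(1)] by (simp add: parity_hom_def)
  then show ?thesis
    using parity_hom_one[OF assms(1,2)] assms(1,3) subgroup.subset by force
qed

lemma (in group) parity_hom_commutator:
  assumes "subgroup H G" "parity_hom G H f" "a \<in> H" "b \<in> H"
  shows "\<not> f (commutator G a b)"
proof -
  note closed = subgroup.m_closed[OF assms(1)] subgroup.m_inv_closed[OF assms(1)]
  have "f (commutator G a b) = (((f a \<noteq> f b) \<noteq> f (inv a)) \<noteq> f (inv b))"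
    using assms(2-4) closed by (simp add: commutator_def parity_hom_def)
  then show ?thesis
    using parity_hom_inv[OF assms(1,2)] assms(3,4) by auto
qed

lemma (in group) parity_hom_kernel_subgroup:
  assumes "subgroup H G" "\<And>i. parity_hom G H (f i)"
  shows "subgroup {g \<in> H. \<forall>i. \<not> f i g} G"
proof (rule subgroupI)
  show "{g \<in> H. \<forall>i. \<not> f i g} \<subseteq> carrier G"
    using subgroup.subset[OF assms(1)] by blast
  show "{g \<in> H. \<forall>i. \<not> f i g} \<noteq> {}"
    using parity_hom_one[OF assms(1,2)] subgroup.one_closed[OF assms(1)] by blast
  show "inv a \<in> {g \<in> H. \<forall>i. \<not> f i g}" if "a \<in> {g \<in> H. \<forall>i. \<not> f i g}" for a
    using that parity_hom_inv[OF assms(1,2)] subgroup.m_inv_closed[OF assms(1)] by simp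
  show "a \<otimes> b \<in> {g \<in> H. \<forall>i. \<not> f i g}"
    if "a \<in> {g \<in> H. \<forall>i. \<not> f i g}" "b \<in> {g \<in> H. \<forall>i. \<not> f i g}" for a b
    using that assms(2) subgroup.m_closed[OF assms(1)] by (simp add: parity_hom_def)
qed

(* par g i: parity of the number of swaps g performs at depth i, the root being depth 0 *)
fun par :: "wr \<Rightarrow> nat \<Rightarrow> bool" where
  "par Leaf i = False"
| "par (Node g1 g2 p) 0 = p"
| "par (Node g1 g2 p) (Suc i) = (par g1 i \<noteq> par g2 i)"

lemma par_wmult: "a \<in> Bset k \<Longrightarrow> b \<in> Bset k \<Longrightarrow> par (wmult a b) i = (par a i \<noteq> par b i)"
proof (induction k arbitrary: a b i)
  case (Suc k)
  then obtain a1 a2 p b1 b2 q where "a = Node a1 a2 p" "b = Node b1 b2 q"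
    and "a1 \<in> Bset k" "a2 \<in> Bset k" "b1 \<in> Bset k" "b2 \<in> Bset k"
    by (auto elim!: Bset_SucE)
  with Suc.IH show ?case
    by (cases i; cases p) auto
qed simp

lemma parity_hom_par: "parity_hom (Bgrp k) (Bset k) (\<lambda>g. par g i)"
  by (simp add: parity_hom_def par_wmult)

lemma Gset_eq: "Gset k = {g \<in> Bset k. \<not> par g (k - 1)}"
proof (induction k rule: Gset.induct)
  case 2
  show ?case by (auto elim!: Bset_SucE)
next
  case (3 k)
  have "x \<in> Gset (Suc (Suc k)) \<longleftrightarrow> x \<in> Bset (Suc (Suc k)) \<and> \<not> par x (Suc k)" for x
  proof (cases x)
    case (Node g1 g2 p)
    then show ?thesis
      using 3 wmult_closed[of g1 "Suc k" g2] par_wmult[of g1 "Suc k" g2 k] by auto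
  qed simp
  then show ?case
    by auto
qed auto

lemma Gset_subset_Bset: "Gset k \<subseteq> Bset k"
  by (simp add: Gset_eq)

definition parity_kernel :: "nat \<Rightarrow> wr set" where
  "parity_kernel k = {g \<in> Bset k. \<forall>i. \<not> par g i}"

lemma subgroup_parity_kernel: "subgroup (parity_kernel k) (Bgrp k)"
  using group.parity_hom_kernel_subgroup[OF group_Bgrp, of "Bset k" k "\<lambda>i g. par g i"]
    subgroup_Bset parity_hom_par
  by (simp add: parity_kernel_def)

lemma commutator_in_parity_kernel:
  "a \<in> Bset k \<Longrightarrow> b \<in> Bset k \<Longrightarrow> commutator (Bgrp k) a b \<in> parity_kernel k"
  using group.parity_hom_commutator[OF group_Bgrp subgroup_Bset parity_hom_par]
    wmult_closed winv_closed
  by (simp add: parity_kernel_def commutator_Bgrp)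

lemma Node_in_parity_kernel:
  "Node g1 g2 p \<in> parity_kernel (Suc k) \<longleftrightarrow>
     \<not> p \<and> g1 \<in> Bset k \<and> g2 \<in> Bset k \<and> wmult g1 g2 \<in> parity_kernel k"
proof -
  have "(\<forall>i. \<not> par (Node g1 g2 p) i) \<longleftrightarrow> \<not> p \<and> (\<forall>i. par g1 i = par g2 i)"
    by (metis par.simps(2,3) not0_implies_Suc)
  then show ?thesis
    using par_wmult[of g1 k g2] wmult_closed by (auto simp: parity_kernel_def)
qed

lemma parity_kernel_subset_Gset: "parity_kernel k \<subseteq> Gset k"
  by (auto simp: parity_kernel_def Gset_eq)

lemma par_wone [simp]: "\<not> par (wone k) i"
  using group.parity_hom_one[OF group_Bgrp subgroup_Bset parity_hom_par] by simp

lemma par_winv: "a \<in> Bset k \<Longrightarrow> par (winv a) i = par a i"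
  using group.parity_hom_inv[OF group_Bgrp subgroup_Bset parity_hom_par] by simp

lemma subgroup_Gset: "subgroup (Gset k) (Bgrp k)"
  using group.parity_hom_kernel_subgroup[OF group_Bgrp subgroup_Bset,
      where f = "\<lambda>_::unit. \<lambda>g. par g (k - 1)"] parity_hom_par
  by (simp add: Gset_eq)

fun lpar :: "wr \<Rightarrow> nat \<Rightarrow> bool" where
  "lpar Leaf i = False"
| "lpar (Node g1 g2 p) i = par g1 i"

(* lpar is no homomorphism on B_(k+1); it becomes one on G_(k+1) because there the two
   halves of an element have equal parity at depth k-1. *)
lemma parity_hom_lpar: "parity_hom (Bgrp (Suc k)) (Gset (Suc k)) (\<lambda>g. lpar g (k - 1))"
  unfolding parity_hom_def
proof (intro ballI)
  fix a b assume "a \<in> Gset (Suc k)" "b \<in> Gset (Suc k)"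
  then obtain a1 a2 p b1 b2 q where ab: "a = Node a1 a2 p" "b = Node b1 b2 q"
    and Bset: "a1 \<in> Bset k" "a2 \<in> Bset k" "b1 \<in> Bset k" "b2 \<in> Bset k" and "\<not> par b k"
    by (auto simp: Gset_eq elim!: Bset_SucE)
  then have "par b1 (k - 1) = par b2 (k - 1)"
    by (cases k) auto
  with ab Bset show "lpar (a \<otimes>\<^bsub>Bgrp (Suc k)\<^esub> b) (k - 1) = (lpar a (k - 1) \<noteq> lpar b (k - 1))"
    by (simp add: par_wmult)
qed

definition G_parity_kernel :: "nat \<Rightarrow> wr set" where
  "G_parity_kernel k = {g \<in> parity_kernel k. \<not> lpar g (k - 2)}"

lemma subgroup_G_parity_kernel: "subgroup (G_parity_kernel (Suc k)) (Bgrp (Suc k))"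
  using group.parity_hom_kernel_subgroup[OF group_Bgrp subgroup_parity_kernel,
      where f = "\<lambda>_::unit. \<lambda>g. lpar g (k - 1)"]
    parity_hom_subset[OF parity_hom_lpar parity_kernel_subset_Gset]
  by (simp add: G_parity_kernel_def)

lemma commutator_in_G_parity_kernel:
  "a \<in> Gset (Suc k) \<Longrightarrow> b \<in> Gset (Suc k) \<Longrightarrow>
    commutator (Bgrp (Suc k)) a b \<in> G_parity_kernel (Suc k)"
  using group.parity_hom_commutator[OF group_Bgrp subgroup_Gset parity_hom_lpar]
    commutator_in_parity_kernel Gset_subset_Bset
  by (fastforce simp: G_parity_kernel_def)

lemma commutator_Node_Node:
  assumes "x1 \<in> Bset n" "x2 \<in> Bset n" "y \<in> Bset n"
  shows "commutator (Bgrp (Suc n)) (Node x1 x2 False) (Node (wone n) y True) =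
    Node (wmult x1 (winv x2)) (wmult (wmult (wmult x2 y) (winv x1)) (winv y)) False"
proof -
  interpret B: group "Bgrp n" by (rule group_Bgrp)
  show ?thesis
    using assms B.r_one B.inv_one by (simp add: commutator_Bgrp wmult_closed winv_closed)
qed

lemma (in group) commutator_factors:
  assumes "h1 \<in> carrier G" "h2 \<in> carrier G" "X \<in> carrier G" "Y \<in> carrier G"
    and "h1 \<otimes> h2 = commutator G X Y"
  shows "X \<otimes> inv (inv h1 \<otimes> X) = h1"
    and "inv h1 \<otimes> X \<otimes> Y \<otimes> inv X \<otimes> inv Y = h2"
proof -
  show "X \<otimes> inv (inv h1 \<otimes> X) = h1"
    using assms by (simp add: inv_mult_group m_assoc [symmetric])
  show "inv h1 \<otimes> X \<otimes> Y \<otimes> inv X \<otimes> inv Y = h2"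
    using assms by (simp add: m_assoc commutator_def inv_solve_left')
qed

lemma Node_eq_commutator:
  assumes "h1 \<in> Bset n" "h2 \<in> Bset n" "X \<in> Bset n" "Y \<in> Bset n"
    and "wmult h1 h2 = commutator (Bgrp n) X Y"
  shows "Node h1 h2 False =
    commutator (Bgrp (Suc n)) (Node X (wmult (winv h1) X) False) (Node (wone n) Y True)"
  using group.commutator_factors[OF group_Bgrp, of h1 n h2 X Y] assms
  by (simp add: commutator_Node_Node wmult_closed winv_closed)

lemma parity_kernel_Suc_0:
  "h \<in> parity_kernel (Suc 0) \<Longrightarrow> h = commutator (Bgrp (Suc 0)) (wone (Suc 0)) (wone (Suc 0))"
  by (auto simp: parity_kernel_def commutator_Bgrp elim!: Bset_SucE dest: spec [of _ 0])

lemma Node_wone_in_Gset: "Y \<in> Gset (Suc k) \<Longrightarrow> Node (wone (Suc k)) Y True \<in> Gset (Suc (Suc k))"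
  using Gset_subset_Bset by (auto simp: Gset_eq simp del: wone.simps)

lemma parity_kernel_commutators:
  "h \<in> parity_kernel (Suc n) \<Longrightarrow>
    \<exists>X\<in>Bset (Suc n). \<exists>Y\<in>Gset (Suc n). h = commutator (Bgrp (Suc n)) X Y"
proof (induction n arbitrary: h)
  case 0
  then show ?case
    using parity_kernel_Suc_0 by force
next
  case (Suc n)
  obtain h1 h2 p where "h = Node h1 h2 p"
    using Suc.prems by (auto simp: parity_kernel_def elim!: Bset_SucE)
  with Suc.prems have h: "h = Node h1 h2 False" "h1 \<in> Bset (Suc n)" "h2 \<in> Bset (Suc n)"
    and "wmult h1 h2 \<in> parity_kernel (Suc n)"
    by (simp_all add: Node_in_parity_kernel)
  then obtain X Y where "X \<in> Bset (Suc n)" "Y \<in> Gset (Suc n)"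
    and "wmult h1 h2 = commutator (Bgrp (Suc n)) X Y"
    using Suc.IH by blast
  then show ?case
    using h Node_eq_commutator [of h1 "Suc n" h2 X Y] Gset_subset_Bset Node_wone_in_Gset
    by (metis Node_in_Bset_Suc subsetD wmult_closed winv_closed)
qed

lemma G_parity_kernel_commutators:
  assumes "h \<in> G_parity_kernel (Suc n)"
  shows "\<exists>X\<in>Gset (Suc n). \<exists>Y\<in>Gset (Suc n). h = commutator (Bgrp (Suc n)) X Y"
proof (cases n)
  case 0
  then show ?thesis
    using assms parity_kernel_Suc_0 by (force simp: G_parity_kernel_def)
next
  case (Suc m)
  obtain h1 h2 p where "h = Node h1 h2 p"
    using assms by (auto simp: G_parity_kernel_def parity_kernel_def elim!: Bset_SucE)
  with assms Suc have h: "h = Node h1 h2 False" "h1 \<in> Bset (Suc m)" "h2 \<in> Bset (Suc m)"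
    and "wmult h1 h2 \<in> parity_kernel (Suc m)" and "\<not> par h1 m"
    by (simp_all add: G_parity_kernel_def Node_in_parity_kernel)
  then obtain X Y where XY: "X \<in> Bset (Suc m)" "Y \<in> Gset (Suc m)"
    and "wmult h1 h2 = commutator (Bgrp (Suc m)) X Y"
    using parity_kernel_commutators by blast
  then have "h = commutator (Bgrp (Suc (Suc m)))
      (Node X (wmult (winv h1) X) False) (Node (wone (Suc m)) Y True)"
    using h Gset_subset_Bset Node_eq_commutator [of h1 "Suc m" h2 X Y] by blast
  moreover have "Node X (wmult (winv h1) X) False \<in> Gset (Suc (Suc m))"
    using XY h \<open>\<not> par h1 m\<close> par_wmult [OF winv_closed [OF h(2)] XY(1)]
    by (simp add: Gset_eq par_wmult par_winv wmult_closed winv_closed)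
  ultimately show ?thesis
    using XY Node_wone_in_Gset Suc by blast
qed

lemma derived_set_Bgrp_Bset: "derived_set (Bgrp k) (Bset k) = parity_kernel k"
proof (cases k)
  case 0
  then show ?thesis
    by (auto simp: derived_set_eq parity_kernel_def commutator_Bgrp)
next
  case (Suc n)
  then show ?thesis
    using commutator_in_parity_kernel parity_kernel_commutators Gset_subset_Bset
    unfolding derived_set_eq by blast
qed

lemma derived_Bgrp_Bset: "derived (Bgrp k) (Bset k) = parity_kernel k"
  by (rule group.derived_eq_subgroup [OF group_Bgrp subgroup_parity_kernel derived_set_Bgrp_Bset])

lemma G_parity_kernel_eq_commutators:
  "G_parity_kernel (Suc n) =
    {commutator (Bgrp (Suc n)) f1 f2 | f1 f2. f1 \<in> Gset (Suc n) \<and> f2 \<in> Gset (Suc n)}"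
  using G_parity_kernel_commutators commutator_in_G_parity_kernel by blast

lemma derived_Bgrp_Gset: "derived (Bgrp (Suc n)) (Gset (Suc n)) = G_parity_kernel (Suc n)"
  by (rule group.derived_eq_subgroup [OF group_Bgrp subgroup_G_parity_kernel])
    (simp only: derived_set_eq G_parity_kernel_eq_commutators)

lemma Node_in_G_parity_kernel:
  assumes "g1 \<in> Bset n" "g2 \<in> Bset n"
  shows "Node g1 g2 False \<in> G_parity_kernel (Suc n) \<longleftrightarrow>
    g1 \<in> Gset n \<and> g2 \<in> Gset n \<and> wmult g1 g2 \<in> parity_kernel n"
proof -
  have "wmult g1 g2 \<in> parity_kernel n \<Longrightarrow> par g1 (n - 1) = par g2 (n - 1)"
    using par_wmult [OF assms] by (auto simp: parity_kernel_def)
  then show ?thesis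
    using assms by (auto simp: G_parity_kernel_def Node_in_parity_kernel Gset_eq)
qed

theorem mainTheorem16:
  fixes k :: nat
  assumes "k \<ge> 1"
  shows "(\<forall>g1 g2. Node g1 g2 False \<in> Bset k \<longrightarrow>
            (Node g1 g2 False \<in> derived (Bgrp k) (Gset k) \<longleftrightarrow>
              g1 \<in> Gset (k - 1) \<and> g2 \<in> Gset (k - 1) \<and>
              wmult g1 g2 \<in> derived (Bgrp (k - 1)) (Bset (k - 1))))
       \<and> derived (Bgrp k) (Gset k) =
           {commutator (Bgrp k) f1 f2 | f1 f2. f1 \<in> Gset k \<and> f2 \<in> Gset k}"
proof -
  obtain n where k: "k = Suc n"
    using assms by (cases k) auto
  show ?thesis
    unfolding k derived_Bgrp_Gset derived_Bgrp_Bset G_parity_kernel_eq_commutators [symmetric]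
    using Node_in_G_parity_kernel by simp
qed

end
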